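(* For every integer $N\ge2$ and every ORN design on $N$ nodes (with arbitrary, possibly unbounded, maximum latency) that guarantees throughput $r$, we have \[ r\;\le\;\frac12+\frac{1}{2(N-1)}. \]
   Context: Nodes are $[N]=\{1,\dots,N\}$. A connection schedule of size $N$ and period $T\ge1$ is a sequence of permutations $\pi_0,\dots,\pi_{T-1}$ of $[N]$; write $\pi_t=\pi_{t \bmod T}$ for all $t\in\mathbb Z$. Its virtual topology is the directed graph $G$ with vertex set $[N]\times\mathbb Z$ whose edges are the virtual edges $(i,t)\to(i,t+1)$ and the physical edges $(i,t)\to(\pi_t(i),t+1)$, for all $i\in[N]$, $t\in\mathbb Z$. The latency of a finite directed path in $G$ is its number of edges. For $a,b\in[N]$, $t\in\mathbb Z$, $\mathcal P(a,b,t)$ is the set of paths in $G$ from $(a,t)$ to some vertex $(b,t')$, and $\mathcal P$ is the set of all paths. A flow is a function $f:\mathcal P\to[0,\infty)$; the load on an edge $e$ is $F(f,e)=\sum_{P\ni e}f(P)$; $f$ is feasible if $F(f,e)\le 1$ for every physical edge $e$. An oblivious routing scheme $R$ assigns to each $(a,b,t)\in[N]\times[N]\times\mathbb Z$ a flow $R_{a,b,t}$ supported on $\mathcal P(a,b,t)$ with $\sum_P R_{a,b,t}(P)=1$, which is periodic: $R_{a,b,t+T}$ is obtained from $R_{a,b,t}$ by shifting every path by $T$ in the time coordinate. An ORN design on $N$ nodes is a connection schedule together with an oblivious routing scheme on its virtual topology. A demand function $D$ assigns to each $t\in\mathbb Z$ an $N\times N$ matrix $D(t)$ with nonnegative entries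 $D(t,a,b)$; it requests throughput equal to the supremum over $t$ of the maximum row sum or column sum of $D(t)$. The induced flow is $f(R,D)=\sum_{a,b,t}D(t,a,b)R_{a,b,t}$. The design guarantees throughput $r$ if $f(R,D)$ is feasible for every demand function $D$ requesting throughput at most $r$. *)

theory Defs
  imports "HOL-Analysis.Analysis" "HOL-Combinatorics.Permutations"
begin

definition connection_schedule :: "nat \<Rightarrow> nat \<Rightarrow> (nat \<Rightarrow> nat \<Rightarrow> nat) \<Rightarrow> bool" where
  "connection_schedule N T sch \<longleftrightarrow> T \<ge> 1 \<and> (\<forall>t<T. sch t permutes {1..N})"

definition sched :: "nat \<Rightarrow> (nat \<Rightarrow> nat \<Rightarrow> nat) \<Rightarrow> int \<Rightarrow> nat \<Rightarrow> nat" where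
  "sched T sch t = sch (nat (t mod int T))"

text \<open>Every edge of the virtual topology goes from time t to time t+1, and each
  vertex (i,t) has exactly two outgoing edges: the virtual one to (i,t+1) and the
  physical one to (pi_t i, t+1) (these are distinct edges even when pi_t i = i).
  Hence a finite path is determined by its start vertex and the list of choices
  (True = physical edge, False = virtual edge).  A physical edge is identified
  with its tail vertex.\<close>

type_synonym vertex = "nat \<times> int"
type_synonym path = "vertex \<times> bool list"

definition step :: "(int \<Rightarrow> nat \<Rightarrow> nat) \<Rightarrow> vertex \<Rightarrow> bool \<Rightarrow> vertex" where
  "step \<sigma> v c = (if c then (\<sigma> (snd v) (fst v), snd v + 1) else (fst v, snd v + 1))"

fun end_vertex :: "(int \<Rightarrow> nat \<Rightarrow> nat) \<Rightarrow> vertex \<Rightarrow> bool list \<Rightarrow> vertex" where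
  "end_vertex \<sigma> v [] = v"
| "end_vertex \<sigma> v (c # cs) = end_vertex \<sigma> (step \<sigma> v c) cs"

fun phys_edges :: "(int \<Rightarrow> nat \<Rightarrow> nat) \<Rightarrow> vertex \<Rightarrow> bool list \<Rightarrow> vertex set" where
  "phys_edges \<sigma> v [] = {}"
| "phys_edges \<sigma> v (c # cs) = (if c then {v} else {}) \<union> phys_edges \<sigma> (step \<sigma> v c) cs"

definition paths_from_to :: "(int \<Rightarrow> nat \<Rightarrow> nat) \<Rightarrow> nat \<Rightarrow> nat \<Rightarrow> int \<Rightarrow> path set" where
  "paths_from_to \<sigma> a b t = {P. fst P = (a, t) \<and> fst (end_vertex \<sigma> (fst P) (snd P)) = b}"

definition shift_path :: "nat \<Rightarrow> path \<Rightarrow> path" where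
  "shift_path T P = ((fst (fst P), snd (fst P) + int T), snd P)"

definition oblivious_routing ::
  "nat \<Rightarrow> nat \<Rightarrow> (nat \<Rightarrow> nat \<Rightarrow> nat) \<Rightarrow> (nat \<Rightarrow> nat \<Rightarrow> int \<Rightarrow> path \<Rightarrow> real) \<Rightarrow> bool" where
  "oblivious_routing N T sch R \<longleftrightarrow>
     (\<forall>a\<in>{1..N}. \<forall>b\<in>{1..N}. \<forall>t.
        (\<forall>P. R a b t P \<ge> 0)
      \<and> (\<forall>P. P \<notin> paths_from_to (sched T sch) a b t \<longrightarrow> R a b t P = 0)
      \<and> (\<Sum>\<^sub>\<infinity>P. ennreal (R a b t P)) = 1
      \<and> (\<forall>P. R a b (t + int T) (shift_path T P) = R a b t P))"

definition ORN_design ::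
  "nat \<Rightarrow> nat \<Rightarrow> (nat \<Rightarrow> nat \<Rightarrow> nat) \<Rightarrow> (nat \<Rightarrow> nat \<Rightarrow> int \<Rightarrow> path \<Rightarrow> real) \<Rightarrow> bool" where
  "ORN_design N T sch R \<longleftrightarrow> connection_schedule N T sch \<and> oblivious_routing N T sch R"

text \<open>D t a b = D(t,a,b) for a,b in {1..N}. It requests throughput at most r iff
  every row sum and column sum of every D(t) is at most r (the supremum of these
  is at most r).\<close>

definition demand_function :: "nat \<Rightarrow> (int \<Rightarrow> nat \<Rightarrow> nat \<Rightarrow> real) \<Rightarrow> bool" where
  "demand_function N D \<longleftrightarrow> (\<forall>t. \<forall>a\<in>{1..N}. \<forall>b\<in>{1..N}. D t a b \<ge> 0)"

definition requests_at_most :: "nat \<Rightarrow> (int \<Rightarrow> nat \<Rightarrow> nat \<Rightarrow> real) \<Rightarrow> real \<Rightarrow> bool" where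
  "requests_at_most N D r \<longleftrightarrow>
     (\<forall>t. (\<forall>a\<in>{1..N}. (\<Sum>b\<in>{1..N}. D t a b) \<le> r) \<and> (\<forall>b\<in>{1..N}. (\<Sum>a\<in>{1..N}. D t a b) \<le> r))"

text \<open>The induced flow f(R,D) on a path (valued in [0,\<infinity>], the sum being infinite).\<close>
definition induced_flow ::
  "nat \<Rightarrow> (nat \<Rightarrow> nat \<Rightarrow> int \<Rightarrow> path \<Rightarrow> real) \<Rightarrow> (int \<Rightarrow> nat \<Rightarrow> nat \<Rightarrow> real) \<Rightarrow> path \<Rightarrow> ennreal" where
  "induced_flow N R D P =
     (\<Sum>\<^sub>\<infinity>(a, b, t) \<in> {1..N} \<times> {1..N} \<times> (UNIV :: int set). ennreal (D t a b * R a b t P))"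

definition load :: "(int \<Rightarrow> nat \<Rightarrow> nat) \<Rightarrow> (path \<Rightarrow> ennreal) \<Rightarrow> vertex \<Rightarrow> ennreal" where
  "load \<sigma> f e = (\<Sum>\<^sub>\<infinity>P \<in> {P. e \<in> phys_edges \<sigma> (fst P) (snd P)}. f P)"

definition feasible :: "nat \<Rightarrow> (int \<Rightarrow> nat \<Rightarrow> nat) \<Rightarrow> (path \<Rightarrow> ennreal) \<Rightarrow> bool" where
  "feasible N \<sigma> f \<longleftrightarrow> (\<forall>i\<in>{1..N}. \<forall>t. load \<sigma> f (i, t) \<le> 1)"

definition guarantees_throughput ::
  "nat \<Rightarrow> nat \<Rightarrow> (nat \<Rightarrow> nat \<Rightarrow> nat) \<Rightarrow> (nat \<Rightarrow> nat \<Rightarrow> int \<Rightarrow> path \<Rightarrow> real) \<Rightarrow> real \<Rightarrow> bool" where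
  "guarantees_throughput N T sch R r \<longleftrightarrow>
     (\<forall>D. demand_function N D \<and> requests_at_most N D r \<longrightarrow>
          feasible N (sched T sch) (induced_flow N R D))"

end

theory Submission
  imports Defs
begin

(*
  For distinct nodes a and b, every path from a to b uses at least two physical edges or a
  single direct edge, i.e. a slot u with pi_u(a) = b. Hence, summed over the start times of one
  period, the expected number U_ab of physical edges used by R_{a,b,.} and the expected number
  V_ab of direct a-to-b edges used satisfy U_ab + V_ab >= 2T.

  Feasibility of the flow induced by a time-constant demand M bounds, for every periodic set E
  of physical edges, the total usage sum_ab M_ab * (usage of E by R_{a,b,.}) by the number of
  edges of E in one period. The uniform demand r/(N-1) on all pairs a <> b with E all edges
  gives r * sum_ab U_ab <= (N-1) N T; the demand r on the single pair (a,b) with E the direct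
  a-to-b edges gives r V_ab <= #(direct a-to-b edges per period), and these numbers add up to
  at most N T. Summing, 2 r T N (N-1) <= N^2 T.
*)

section \<open>Infinite sums in ennreal\<close>

(* The library fact of this name is shadowed by a later one about ennreal_of_enat. *)
lemma summable_on_ennreal [simp]: "(f :: 'a \<Rightarrow> ennreal) summable_on A"
  by (simp add: nonneg_summable_on_complete)

lemma infsum_mono_set_ennreal:
  fixes f :: "'a \<Rightarrow> ennreal"
  assumes "A \<subseteq> B"
  shows "infsum f A \<le> infsum f B"
  using assms by (intro infsum_mono_neutral) auto

lemma infsum_Sigma_finite_ennreal:
  fixes f :: "'a \<times> 'b \<Rightarrow> ennreal"
  assumes "finite A"
  shows "infsum f (Sigma A B) = (\<Sum>x\<in>A. infsum (\<lambda>y. f (x, y)) (B x))"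
  using assms
proof (induction A rule: finite_induct)
  case (insert x A)
  have "Sigma (insert x A) B = Pair x ` B x \<union> Sigma A B" by auto
  moreover have "Pair x ` B x \<inter> Sigma A B = {}" using insert.hyps(2) by auto
  ultimately have "infsum f (Sigma (insert x A) B) = infsum f (Pair x ` B x) + infsum f (Sigma A B)"
    by (simp add: infsum_Un_disjoint)
  also have "infsum f (Pair x ` B x) = infsum (\<lambda>y. f (x, y)) (B x)"
    by (subst infsum_reindex) (auto simp: inj_on_def o_def)
  finally show ?case using insert by simp
qed simp

lemma infsum_Sigma_ennreal:
  fixes f :: "'a \<times> 'b \<Rightarrow> ennreal"
  shows "infsum f (Sigma A B) = infsum (\<lambda>x. infsum (\<lambda>y. f (x, y)) (B x)) A"
    (is "_ = infsum ?g A")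
proof (rule antisym)
  have partial: "sum f F \<le> infsum ?g A" if F: "finite F" "F \<subseteq> Sigma A B" for F
  proof -
    have "F \<subseteq> Sigma (fst ` F) B"
      using F(2) by force
    then have "infsum f F \<le> infsum f (Sigma (fst ` F) B)"
      by (rule infsum_mono_set_ennreal)
    then have "sum f F \<le> infsum f (Sigma (fst ` F) B)"
      using F(1) by simp
    also have "\<dots> = sum ?g (fst ` F)"
      using F(1) by (intro infsum_Sigma_finite_ennreal) simp
    also have "\<dots> = infsum ?g (fst ` F)"
      using F(1) by simp
    also have "\<dots> \<le> infsum ?g A"
      using F(2) by (intro infsum_mono_set_ennreal) auto
    finally show ?thesis .
  qed
  have "infsum f (Sigma A B) = (SUP F\<in>{F. finite F \<and> F \<subseteq> Sigma A B}. sum f F)"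
    by (rule nonneg_infsum_complete) simp
  also have "\<dots> \<le> infsum ?g A"
    using partial by (intro SUP_least) simp
  finally show "infsum f (Sigma A B) \<le> infsum ?g A" .
next
  have partial: "sum ?g X \<le> infsum f (Sigma A B)" if X: "finite X" "X \<subseteq> A" for X
  proof -
    have "sum ?g X = infsum f (Sigma X B)"
      using X(1) by (rule infsum_Sigma_finite_ennreal[symmetric])
    also have "\<dots> \<le> infsum f (Sigma A B)"
      using X(2) by (intro infsum_mono_set_ennreal) auto
    finally show ?thesis .
  qed
  have "infsum ?g A = (SUP X\<in>{X. finite X \<and> X \<subseteq> A}. sum ?g X)"
    by (rule nonneg_infsum_complete) simp
  also have "\<dots> \<le> infsum f (Sigma A B)"
    using partial by (intro SUP_least) simp
  finally show "infsum ?g A \<le> infsum f (Sigma A B)" .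
qed

lemma infsum_swap_ennreal:
  fixes f :: "'a \<Rightarrow> 'b \<Rightarrow> ennreal"
  shows "infsum (\<lambda>x. infsum (f x) B) A = infsum (\<lambda>y. infsum (\<lambda>x. f x y) A) B"
proof -
  have "infsum (\<lambda>x. infsum (f x) B) A = infsum (\<lambda>(x, y). f x y) (A \<times> B)"
    by (simp add: infsum_Sigma_ennreal)
  also have "\<dots> = infsum (\<lambda>(y, x). f x y) (B \<times> A)"
    by (subst product_swap[symmetric], subst infsum_reindex) (auto simp: o_def)
  also have "\<dots> = infsum (\<lambda>y. infsum (\<lambda>x. f x y) A) B"
    by (simp add: infsum_Sigma_ennreal)
  finally show ?thesis .
qed

lemma infsum_cmult_right_ennreal:
  fixes f :: "'a \<Rightarrow> ennreal"
  shows "infsum (\<lambda>x. c * f x) A = c * infsum f A"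
  by (simp add: nonneg_infsum_complete sum_distrib_left[symmetric] SUP_mult_left_ennreal)

lemma infsum_cmult_left_ennreal:
  fixes f :: "'a \<Rightarrow> ennreal"
  shows "infsum (\<lambda>x. f x * c) A = infsum f A * c"
  using infsum_cmult_right_ennreal[of c f A] by (simp add: mult.commute)

lemma infsum_sum_ennreal:
  fixes f :: "'i \<Rightarrow> 'a \<Rightarrow> ennreal"
  assumes "finite I"
  shows "infsum (\<lambda>x. \<Sum>i\<in>I. f i x) A = (\<Sum>i\<in>I. infsum (f i) A)"
  using assms by (induction I rule: finite_induct) (simp_all add: infsum_add)

section \<open>Physical edges of a path\<close>

lemma finite_phys_edges: "finite (phys_edges \<sigma> v cs)"
  by (induction cs arbitrary: v) auto

lemma phys_edges_time_ge: "e \<in> phys_edges \<sigma> v cs \<Longrightarrow> snd v \<le> snd e"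
proof (induction cs arbitrary: v)
  case (Cons c cs)
  then show ?case
    by (cases "e = v") (force simp: step_def split: if_splits)+
qed simp

lemma end_vertex_virtual: "phys_edges \<sigma> v cs = {} \<Longrightarrow> fst (end_vertex \<sigma> v cs) = fst v"
  by (induction cs arbitrary: v) (auto simp: step_def split: if_splits)

lemma phys_edges_subset:
  assumes "\<And>t x. x \<in> V \<Longrightarrow> \<sigma> t x \<in> V" and "fst v \<in> V"
  shows "phys_edges \<sigma> v cs \<subseteq> V \<times> UNIV"
  using assms(2)
proof (induction cs arbitrary: v)
  case (Cons c cs)
  then have "fst (step \<sigma> v c) \<in> V" using assms(1) by (simp add: step_def)
  with Cons show ?case by (cases v) auto
qed simp

lemma phys_edges_shift:
  assumes "\<And>t. \<sigma> (t + d) = \<sigma> t"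
  shows "phys_edges \<sigma> (x, t + d) cs = (\<lambda>(j, u). (j, u + d)) ` phys_edges \<sigma> (x, t) cs"
proof (induction cs arbitrary: x t)
  case (Cons c cs)
  have "step \<sigma> (x, t + d) c = (fst (step \<sigma> (x, t) c), (t + 1) + d)"
    and "step \<sigma> (x, t) c = (fst (step \<sigma> (x, t) c), t + 1)"
    by (simp_all add: step_def assms)
  then show ?case
    by (simp only: phys_edges.simps Cons.IH) (auto simp: image_Un)
qed simp

definition direct_edges :: "(int \<Rightarrow> nat \<Rightarrow> nat) \<Rightarrow> nat \<Rightarrow> nat \<Rightarrow> vertex set" where
  "direct_edges \<sigma> a b = {(i, u). i = a \<and> \<sigma> u a = b}"

lemma phys_edges_two_or_direct:
  assumes "fst (end_vertex \<sigma> v cs) \<noteq> fst v"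
  shows "2 \<le> card (phys_edges \<sigma> v cs)
    \<or> phys_edges \<sigma> v cs \<inter> direct_edges \<sigma> (fst v) (fst (end_vertex \<sigma> v cs)) \<noteq> {}"
  using assms
proof (induction cs arbitrary: v)
  case (Cons c cs)
  show ?case
  proof (cases c)
    case False
    with Cons.prems Cons.IH[of "step \<sigma> v c"] show ?thesis by (simp add: step_def)
  next
    case True
    let ?w = "step \<sigma> v c"
    have edges: "phys_edges \<sigma> v (c # cs) = insert v (phys_edges \<sigma> ?w cs)"
      using True by simp
    show ?thesis
    proof (cases "phys_edges \<sigma> ?w cs = {}")
      case True
      then have "fst (end_vertex \<sigma> v (c # cs)) = \<sigma> (snd v) (fst v)"
        using \<open>c\<close> end_vertex_virtual by (simp add: step_def)
      then show ?thesis
        using edges by (cases v) (auto simp: direct_edges_def)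
    next
      case False
      then obtain e where e: "e \<in> phys_edges \<sigma> ?w cs" by blast
      then have "e \<noteq> v"
        using phys_edges_time_ge[OF e] True by (auto simp: step_def)
      then have "card {v, e} \<le> card (phys_edges \<sigma> v (c # cs))"
        using e edges by (intro card_mono finite_phys_edges) auto
      with \<open>e \<noteq> v\<close> show ?thesis by simp
    qed
  qed
qed simp

section \<open>Periodicity and edge usage\<close>

definition shift_time :: "int \<Rightarrow> path \<Rightarrow> path" where
  "shift_time d P = ((fst (fst P), snd (fst P) + d), snd P)"

lemma periodic_shift_time:
  assumes "\<And>t P. \<rho> (t + int T) (shift_path T P) = \<rho> t P"
  shows "\<rho> (t + k * int T) (shift_time (k * int T) P) = \<rho> t P"
proof (induction k arbitrary: t P rule: int_induct[where k = 0])
  case base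
  then show ?case by (simp add: shift_time_def)
next
  case (step1 i)
  have "\<rho> (t + (i + 1) * int T) (shift_time ((i + 1) * int T) P)
      = \<rho> ((t + i * int T) + int T) (shift_path T (shift_time (i * int T) P))"
    by (simp add: shift_time_def shift_path_def algebra_simps)
  with step1 assms show ?case by simp
next
  case (step2 i)
  have "\<rho> (t + (i - 1) * int T) (shift_time ((i - 1) * int T) P)
      = \<rho> ((t - int T) + i * int T) (shift_time (i * int T) (shift_time (- int T) P))"
    by (simp add: shift_time_def algebra_simps)
  also have "\<dots> = \<rho> (t - int T) (shift_time (- int T) P)"
    using step2 by simp
  also have "\<dots> = \<rho> ((t - int T) + int T) (shift_path T (shift_time (- int T) P))"
    using assms[of "t - int T" "shift_time (- int T) P"] by simp
  finally show ?case by (simp add: shift_time_def shift_path_def)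
qed

lemma infsum_int_residues_ennreal:
  fixes H :: "int \<Rightarrow> ennreal" and m :: int
  assumes "0 < m"
  shows "infsum H UNIV = (\<Sum>s\<in>{0..<m}. \<Sum>\<^sub>\<infinity>k. H (s + k * m))"
proof -
  have "bij_betw (\<lambda>(s, k). s + k * m) ({0..<m} \<times> UNIV) UNIV"
    by (rule bij_betwI[where g = "\<lambda>t. (t mod m, t div m)"]) (use assms in auto)
  then have "infsum H UNIV = infsum (\<lambda>(s, k). H (s + k * m)) ({0..<m} \<times> UNIV)"
    by (subst infsum_reindex_bij_betw[symmetric]) (simp_all add: case_prod_unfold)
  then show ?thesis
    by (simp add: infsum_Sigma_ennreal)
qed

lemma add_mult_in_window_iff:
  fixes u k m :: int
  assumes "0 < m"
  shows "u + k * m \<in> {0..<m} \<longleftrightarrow> k = - (u div m)"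
proof -
  have "u + k * m \<in> {0..<m} \<longleftrightarrow> (u + k * m) div m = 0"
    unfolding zdiv_eq_0_iff atLeastLessThan_iff using assms by linarith
  also have "(u + k * m) div m = u div m + k"
    using assms by simp
  finally show ?thesis by linarith
qed

lemma infsum_card_window_translates:
  fixes B :: "('a \<times> int) set" and m :: int
  assumes "finite B" and "0 < m"
  shows "(\<Sum>\<^sub>\<infinity>k. of_nat (card ((\<lambda>(j, u). (j, u + k * m)) ` B \<inter> UNIV \<times> {0..<m})) :: ennreal)
    = of_nat (card B)"
proof -
  let ?f = "\<lambda>k (j, u). (j, u + k * m)"
  have "(of_nat (card (?f k ` B \<inter> UNIV \<times> {0..<m})) :: ennreal)
      = (\<Sum>e\<in>B. of_bool (k = - (snd e div m)))" for k
  proof -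
    have "(of_nat (card (?f k ` B \<inter> UNIV \<times> {0..<m})) :: ennreal)
        = (\<Sum>x\<in>?f k ` B. of_bool (x \<in> UNIV \<times> {0..<m}))"
      using assms(1) by (simp add: Int_def)
    also have "\<dots> = (\<Sum>e\<in>B. of_bool (?f k e \<in> UNIV \<times> {0..<m}))"
      by (rule sum.reindex_cong[of "?f k"]) (auto simp: inj_on_def)
    finally show ?thesis
      by (simp add: case_prod_unfold add_mult_in_window_iff[OF assms(2)] del: atLeastLessThan_iff)
  qed
  then have "(\<Sum>\<^sub>\<infinity>k. of_nat (card (?f k ` B \<inter> UNIV \<times> {0..<m})) :: ennreal)
      = (\<Sum>\<^sub>\<infinity>k. \<Sum>e\<in>B. of_bool (k = - (snd e div m)))"
    by simp
  also have "\<dots> = (\<Sum>e\<in>B. \<Sum>\<^sub>\<infinity>k. of_bool (k = - (snd e div m)))"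
    using assms(1) by (rule infsum_sum_ennreal)
  also have "\<dots> = (\<Sum>e\<in>B. 1)"
  proof (rule sum.cong)
    fix e
    have "(\<Sum>\<^sub>\<infinity>k. of_bool (k = - (snd e div m)) :: ennreal)
        = (\<Sum>\<^sub>\<infinity>k\<in>{- (snd e div m)}. 1)"
      by (rule infsum_cong_neutral) auto
    then show "(\<Sum>\<^sub>\<infinity>k. of_bool (k = - (snd e div m)) :: ennreal) = 1"
      by simp
  qed simp
  finally show ?thesis by simp
qed

definition edge_usage :: "(int \<Rightarrow> nat \<Rightarrow> nat) \<Rightarrow> (path \<Rightarrow> real) \<Rightarrow> vertex set \<Rightarrow> ennreal" where
  "edge_usage \<sigma> \<rho> E = (\<Sum>\<^sub>\<infinity>P. ennreal (\<rho> P) * of_nat (card (phys_edges \<sigma> (fst P) (snd P) \<inter> E)))"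

definition period_edge_usage ::
  "nat \<Rightarrow> (int \<Rightarrow> nat \<Rightarrow> nat) \<Rightarrow> (int \<Rightarrow> path \<Rightarrow> real) \<Rightarrow> vertex set \<Rightarrow> ennreal" where
  "period_edge_usage T \<sigma> \<rho> E = (\<Sum>s\<in>{0..<int T}. edge_usage \<sigma> (\<rho> s) E)"

lemma edge_usage_shift_period:
  fixes \<rho> :: "int \<Rightarrow> path \<Rightarrow> real"
  assumes \<sigma>: "\<And>t k. \<sigma> (t + k * int T) = \<sigma> t"
    and \<rho>: "\<And>t P. \<rho> (t + int T) (shift_path T P) = \<rho> t P"
    and E: "\<And>i t k. (i, t + k * int T) \<in> E \<longleftrightarrow> (i, t) \<in> E"
  shows "edge_usage \<sigma> (\<rho> (s + k * int T)) (E \<inter> W) = (\<Sum>\<^sub>\<infinity>Q. ennreal (\<rho> s Q) *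
    of_nat (card ((\<lambda>(j, u). (j, u + k * int T)) ` (phys_edges \<sigma> (fst Q) (snd Q) \<inter> E) \<inter> W)))"
proof -
  let ?shift = "\<lambda>(j, u). (j, u + k * int T)"
  have shift_edges: "phys_edges \<sigma> (fst (shift_time (k * int T) Q)) (snd (shift_time (k * int T) Q)) \<inter> (E \<inter> W)
      = ?shift ` (phys_edges \<sigma> (fst Q) (snd Q) \<inter> E) \<inter> W" for Q
    using phys_edges_shift[of \<sigma> "k * int T" "fst (fst Q)" "snd (fst Q)" "snd Q"] \<sigma> E
    by (auto simp: shift_time_def)
  have "bij_betw (shift_time (k * int T)) UNIV UNIV"
    by (rule bij_betwI[where g = "shift_time (- k * int T)"]) (auto simp: shift_time_def)
  then have "edge_usage \<sigma> (\<rho> (s + k * int T)) (E \<inter> W) = (\<Sum>\<^sub>\<infinity>Q. ennreal (\<rho> (s + k * int T) (shift_time (k * int T) Q))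
      * of_nat (card (phys_edges \<sigma> (fst (shift_time (k * int T) Q)) (snd (shift_time (k * int T) Q)) \<inter> (E \<inter> W))))"
    unfolding edge_usage_def by (rule infsum_reindex_bij_betw[symmetric])
  then show ?thesis
    by (simp only: shift_edges periodic_shift_time[where \<rho> = \<rho>, OF \<rho>])
qed

lemma infsum_edge_usage_periodic:
  fixes \<rho> :: "int \<Rightarrow> path \<Rightarrow> real"
  assumes "0 < T"
    and \<sigma>: "\<And>t k. \<sigma> (t + k * int T) = \<sigma> t"
    and \<rho>: "\<And>t P. \<rho> (t + int T) (shift_path T P) = \<rho> t P"
    and E: "\<And>i t k. (i, t + k * int T) \<in> E \<longleftrightarrow> (i, t) \<in> E"
  shows "(\<Sum>\<^sub>\<infinity>t. edge_usage \<sigma> (\<rho> t) (E \<inter> UNIV \<times> {0..<int T})) = period_edge_usage T \<sigma> \<rho> E"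
proof -
  let ?W = "UNIV \<times> {0..<int T}"
  let ?PE = "\<lambda>Q. phys_edges \<sigma> (fst Q) (snd Q)"
  have "(\<Sum>\<^sub>\<infinity>k. edge_usage \<sigma> (\<rho> (s + k * int T)) (E \<inter> ?W)) = edge_usage \<sigma> (\<rho> s) E" for s
  proof -
    have "(\<Sum>\<^sub>\<infinity>k. edge_usage \<sigma> (\<rho> (s + k * int T)) (E \<inter> ?W))
        = (\<Sum>\<^sub>\<infinity>Q. ennreal (\<rho> s Q) *
            (\<Sum>\<^sub>\<infinity>k. of_nat (card ((\<lambda>(j, u). (j, u + k * int T)) ` (?PE Q \<inter> E) \<inter> ?W))))"
      by (simp add: edge_usage_shift_period[where \<sigma> = \<sigma> and \<rho> = \<rho> and E = E, OF \<sigma> \<rho> E] infsum_cmult_right_ennreal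
          infsum_swap_ennreal[where B = UNIV])
    also have "\<dots> = edge_usage \<sigma> (\<rho> s) E"
      using \<open>0 < T\<close> by (simp add: infsum_card_window_translates finite_phys_edges edge_usage_def)
    finally show ?thesis .
  qed
  moreover have "(\<Sum>\<^sub>\<infinity>t. edge_usage \<sigma> (\<rho> t) (E \<inter> ?W))
      = (\<Sum>s\<in>{0..<int T}. \<Sum>\<^sub>\<infinity>k. edge_usage \<sigma> (\<rho> (s + k * int T)) (E \<inter> ?W))"
    using \<open>0 < T\<close> by (intro infsum_int_residues_ennreal) simp
  ultimately show ?thesis
    by (simp add: period_edge_usage_def)
qed

section \<open>The capacity inequality\<close>

lemma sched_periodic: "sched T sch (t + k * int T) = sched T sch t"
  by (simp add: sched_def)

lemma sched_in_nodes:
  assumes "connection_schedule N T sch" and "x \<in> {1..N}"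
  shows "sched T sch t x \<in> {1..N}"
proof -
  have "nat (t mod int T) < T"
    using assms(1) by (simp add: connection_schedule_def nat_less_iff)
  then have "sched T sch t permutes {1..N}"
    using assms(1) by (simp add: connection_schedule_def sched_def)
  then show ?thesis
    using assms(2) by (rule permutes_in_image[THEN iffD2])
qed

lemma sum_load_eq_infsum:
  assumes "finite A"
  shows "(\<Sum>e\<in>A. load \<sigma> f e) = (\<Sum>\<^sub>\<infinity>P. f P * of_nat (card (phys_edges \<sigma> (fst P) (snd P) \<inter> A)))"
proof -
  have load: "load \<sigma> f e = (\<Sum>\<^sub>\<infinity>P. f P * of_bool (e \<in> phys_edges \<sigma> (fst P) (snd P)))" for e
    unfolding load_def by (rule infsum_cong_neutral) auto
  have "(\<Sum>e\<in>A. load \<sigma> f e)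
      = (\<Sum>\<^sub>\<infinity>P. \<Sum>e\<in>A. f P * of_bool (e \<in> phys_edges \<sigma> (fst P) (snd P)))"
    by (simp only: load infsum_sum_ennreal[OF assms])
  also have "\<dots> = (\<Sum>\<^sub>\<infinity>P. f P * of_nat (card (phys_edges \<sigma> (fst P) (snd P) \<inter> A)))"
    using assms by (simp add: sum_distrib_left[symmetric] Int_commute)
  finally show ?thesis .
qed

lemma infsum_induced_flow_mult:
  "(\<Sum>\<^sub>\<infinity>P. induced_flow N R D P * c P)
    = (\<Sum>a\<in>{1..N}. \<Sum>b\<in>{1..N}. \<Sum>\<^sub>\<infinity>t. \<Sum>\<^sub>\<infinity>P. ennreal (D t a b * R a b t P) * c P)"
proof -
  have "(\<Sum>\<^sub>\<infinity>P. induced_flow N R D P * c P)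
      = (\<Sum>\<^sub>\<infinity>P. \<Sum>\<^sub>\<infinity>(a, b, t) \<in> {1..N} \<times> {1..N} \<times> UNIV. ennreal (D t a b * R a b t P) * c P)"
    by (simp add: induced_flow_def infsum_cmult_left_ennreal[symmetric] case_prod_unfold)
  also have "\<dots> = (\<Sum>\<^sub>\<infinity>(a, b, t) \<in> {1..N} \<times> {1..N} \<times> UNIV. \<Sum>\<^sub>\<infinity>P. ennreal (D t a b * R a b t P) * c P)"
    by (simp add: case_prod_unfold infsum_swap_ennreal[where B = UNIV])
  also have "\<dots> = (\<Sum>a\<in>{1..N}. \<Sum>b\<in>{1..N}. \<Sum>\<^sub>\<infinity>t. \<Sum>\<^sub>\<infinity>P. ennreal (D t a b * R a b t P) * c P)"
    by (simp add: infsum_Sigma_ennreal)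
  finally show ?thesis .
qed

lemma capacity_bound:
  fixes M :: "nat \<Rightarrow> nat \<Rightarrow> real"
  assumes orn: "ORN_design N T sch R" and thr: "guarantees_throughput N T sch R r"
    and M: "\<And>a b. a \<in> {1..N} \<Longrightarrow> b \<in> {1..N} \<Longrightarrow> 0 \<le> M a b"
    and req: "requests_at_most N (\<lambda>t. M) r"
    and E_nodes: "E \<subseteq> {1..N} \<times> UNIV"
    and E_periodic: "\<And>i t k. (i, t + k * int T) \<in> E \<longleftrightarrow> (i, t) \<in> E"
  shows "(\<Sum>a\<in>{1..N}. \<Sum>b\<in>{1..N}. ennreal (M a b) * period_edge_usage T (sched T sch) (R a b) E)
    \<le> of_nat (card (E \<inter> UNIV \<times> {0..<int T}))"
proof -
  let ?\<sigma> = "sched T sch" and ?EW = "E \<inter> UNIV \<times> {0..<int T}"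
  have T: "0 < T" and R: "oblivious_routing N T sch R"
    using orn by (auto simp: ORN_design_def connection_schedule_def)
  have "?EW \<subseteq> {1..N} \<times> {0..<int T}"
    using E_nodes by blast
  then have "finite ?EW"
    by (rule finite_subset) simp
  have "demand_function N (\<lambda>t. M)"
    using M by (simp add: demand_function_def)
  then have "feasible N ?\<sigma> (induced_flow N R (\<lambda>t. M))"
    using thr req unfolding guarantees_throughput_def by blast
  then have "load ?\<sigma> (induced_flow N R (\<lambda>t. M)) e \<le> 1" if "e \<in> ?EW" for e
    using that E_nodes by (auto simp: feasible_def)
  then have "(\<Sum>e\<in>?EW. load ?\<sigma> (induced_flow N R (\<lambda>t. M)) e) \<le> (\<Sum>e\<in>?EW. 1)"
    by (rule sum_mono)
  then have "(\<Sum>e\<in>?EW. load ?\<sigma> (induced_flow N R (\<lambda>t. M)) e) \<le> of_nat (card ?EW)"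
    by simp
  moreover have "(\<Sum>\<^sub>\<infinity>t. \<Sum>\<^sub>\<infinity>P. ennreal (M a b * R a b t P) * of_nat (card (phys_edges ?\<sigma> (fst P) (snd P) \<inter> ?EW)))
      = ennreal (M a b) * period_edge_usage T ?\<sigma> (R a b) E"
    if a: "a \<in> {1..N}" and b: "b \<in> {1..N}" for a b
  proof -
    have R_ab: "\<And>t P. 0 \<le> R a b t P" "\<And>t P. R a b (t + int T) (shift_path T P) = R a b t P"
      using R a b by (auto simp: oblivious_routing_def)
    have "(\<Sum>\<^sub>\<infinity>t. \<Sum>\<^sub>\<infinity>P. ennreal (M a b * R a b t P) * of_nat (card (phys_edges ?\<sigma> (fst P) (snd P) \<inter> ?EW)))
        = (\<Sum>\<^sub>\<infinity>t. ennreal (M a b) * edge_usage ?\<sigma> (R a b t) ?EW)"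
      using M[OF a b] R_ab(1)
      by (simp add: edge_usage_def ennreal_mult mult.assoc infsum_cmult_right_ennreal)
    also have "\<dots> = ennreal (M a b) * (\<Sum>\<^sub>\<infinity>t. edge_usage ?\<sigma> (R a b t) ?EW)"
      by (rule infsum_cmult_right_ennreal)
    also have "(\<Sum>\<^sub>\<infinity>t. edge_usage ?\<sigma> (R a b t) ?EW) = period_edge_usage T ?\<sigma> (R a b) E"
      using T sched_periodic R_ab(2) E_periodic by (rule infsum_edge_usage_periodic)
    finally show ?thesis .
  qed
  ultimately show ?thesis
    using \<open>finite ?EW\<close> by (simp add: sum_load_eq_infsum infsum_induced_flow_mult)
qed

section \<open>Two demand patterns\<close>

definition offdiagonal :: "nat \<Rightarrow> (nat \<times> nat) set" where
  "offdiagonal N = {(a, b) \<in> {1..N} \<times> {1..N}. a \<noteq> b}"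

lemma card_offdiagonal: "card (offdiagonal N) = N * (N - 1)"
proof -
  have "offdiagonal N = (SIGMA a:{1..N}. {1..N} - {a})"
    by (auto simp: offdiagonal_def)
  then show ?thesis by simp
qed

lemma sum_offdiagonal:
  assumes "\<And>a. a \<in> {1..N} \<Longrightarrow> g a a = 0"
  shows "(\<Sum>a\<in>{1..N}. \<Sum>b\<in>{1..N}. g a b) = (\<Sum>(a, b)\<in>offdiagonal N. g a b)"
proof -
  have "(\<Sum>a\<in>{1..N}. \<Sum>b\<in>{1..N}. g a b) = (\<Sum>(a, b)\<in>{1..N} \<times> {1..N}. g a b)"
    by (rule sum.cartesian_product)
  also have "\<dots> = (\<Sum>(a, b)\<in>offdiagonal N. g a b)"
    using assms by (intro sum.mono_neutral_right) (auto simp: offdiagonal_def)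
  finally show ?thesis .
qed

lemma sum_if_eq_const:
  assumes "x \<in> {1..N}"
  shows "(\<Sum>y\<in>{1..N}. if y = x then 0 else c) = of_nat (N - 1) * c"
proof -
  have "(\<Sum>y\<in>{1..N}. if y = x then 0 else c) = (\<Sum>y\<in>{1..N} - {x}. c)"
    using assms by (intro sum.mono_neutral_cong_right) auto
  then show ?thesis
    using assms by simp
qed

lemma requests_at_most_uniform:
  assumes "2 \<le> N"
  shows "requests_at_most N (\<lambda>t a b. if a = b then 0 else r / real (N - 1)) r"
  unfolding requests_at_most_def
proof (intro allI conjI ballI)
  have col: "(\<Sum>y\<in>{1..N}. if y = x then 0 else r / real (N - 1)) = r" if "x \<in> {1..N}" for x
    using sum_if_eq_const[OF that, of "r / real (N - 1)"] assms by simp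
  fix x assume x: "x \<in> {1..N}"
  have "(\<Sum>y\<in>{1..N}. if x = y then 0 else r / real (N - 1))
      = (\<Sum>y\<in>{1..N}. if y = x then 0 else r / real (N - 1))"
    by (rule sum.cong) auto
  with col[OF x] show "(\<Sum>y\<in>{1..N}. if x = y then 0 else r / real (N - 1)) \<le> r"
    by simp
  show "(\<Sum>y\<in>{1..N}. if y = x then 0 else r / real (N - 1)) \<le> r"
    using col[OF x] by simp
qed

lemma uniform_demand_bound:
  assumes "2 \<le> N" and orn: "ORN_design N T sch R" and thr: "guarantees_throughput N T sch R r"
    and "0 \<le> r"
  shows "ennreal r * (\<Sum>(a, b)\<in>offdiagonal N. period_edge_usage T (sched T sch) (R a b) ({1..N} \<times> UNIV))
    \<le> of_nat ((N - 1) * (N * T))"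
proof -
  let ?c = "r / real (N - 1)" and ?usage = "\<lambda>a b. period_edge_usage T (sched T sch) (R a b) ({1..N} \<times> UNIV)"
  have "0 < real (N - 1)"
    using assms(1) by simp
  have "ennreal ?c * (\<Sum>(a, b)\<in>offdiagonal N. ?usage a b)
      = (\<Sum>a\<in>{1..N}. \<Sum>b\<in>{1..N}. ennreal (if a = b then 0 else ?c) * ?usage a b)"
    by (subst sum_offdiagonal) (auto simp: sum_distrib_left case_prod_unfold offdiagonal_def intro!: sum.cong)
  also have "\<dots> \<le> of_nat (card ({1..N} \<times> UNIV \<inter> UNIV \<times> {0..<int T}))"
    using \<open>0 \<le> r\<close> by (intro capacity_bound[OF orn thr _ requests_at_most_uniform[OF assms(1)]]) auto
  also have "{1..N} \<times> UNIV \<inter> UNIV \<times> {0..<int T} = {1..N} \<times> {0..<int T}"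
    by auto
  finally have "ennreal (real (N - 1)) * (ennreal ?c * (\<Sum>(a, b)\<in>offdiagonal N. ?usage a b))
      \<le> ennreal (real (N - 1)) * of_nat (N * T)"
    by (intro mult_left_mono) simp_all
  then show ?thesis
    using \<open>0 < real (N - 1)\<close> \<open>0 \<le> r\<close>
    by (simp add: ennreal_mult[symmetric] mult.assoc[symmetric] ennreal_of_nat_eq_real_of_nat)
qed

lemma single_demand_bound:
  assumes orn: "ORN_design N T sch R" and thr: "guarantees_throughput N T sch R r"
    and "0 \<le> r" and a: "a \<in> {1..N}" and b: "b \<in> {1..N}"
  shows "ennreal r * period_edge_usage T (sched T sch) (R a b) (direct_edges (sched T sch) a b)
    \<le> of_nat (card (direct_edges (sched T sch) a b \<inter> UNIV \<times> {0..<int T}))"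
proof -
  define M where "M a' b' = (if a' = a \<and> b' = b then r else 0)" for a' b' :: nat
  have "(\<Sum>b'\<in>{1..N}. M a' b') = (if a' = a then r else 0)" for a'
    using b by (simp add: M_def)
  moreover have "(\<Sum>a'\<in>{1..N}. M a' b') = (if b' = b then r else 0)" for b'
    using a by (simp add: M_def)
  ultimately have req: "requests_at_most N (\<lambda>t. M) r"
    using \<open>0 \<le> r\<close> by (simp add: requests_at_most_def)
  have "(\<Sum>a'\<in>{1..N}. \<Sum>b'\<in>{1..N}. ennreal (M a' b') *
        period_edge_usage T (sched T sch) (R a' b') (direct_edges (sched T sch) a b))
      \<le> of_nat (card (direct_edges (sched T sch) a b \<inter> UNIV \<times> {0..<int T}))"
    using \<open>0 \<le> r\<close> a
    by (intro capacity_bound[OF orn thr _ req]) (auto simp: M_def direct_edges_def sched_periodic)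
  moreover have "(\<Sum>a'\<in>{1..N}. \<Sum>b'\<in>{1..N}. ennreal (M a' b') *
        period_edge_usage T (sched T sch) (R a' b') (direct_edges (sched T sch) a b))
      = ennreal r * period_edge_usage T (sched T sch) (R a b) (direct_edges (sched T sch) a b)"
  proof -
    have "ennreal (M a' b') * period_edge_usage T (sched T sch) (R a' b') (direct_edges (sched T sch) a b)
        = (if b' = b then if a' = a then
            ennreal r * period_edge_usage T (sched T sch) (R a b) (direct_edges (sched T sch) a b)
           else 0 else 0)" for a' b'
      by (simp add: M_def)
    then show ?thesis
      using a b by (simp del: atLeastAtMost_iff add: sum.delta)
  qed
  ultimately show ?thesis by simp
qed

section \<open>Paths between distinct nodes and direct edges\<close>

lemma card_phys_edges_nodes_direct:
  assumes nodes: "\<And>t x. x \<in> {1..N} \<Longrightarrow> \<sigma> t x \<in> {1..N}" and a: "a \<in> {1..N}"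
    and end_b: "fst (end_vertex \<sigma> (a, s) cs) = b" and "a \<noteq> b"
  shows "2 \<le> card (phys_edges \<sigma> (a, s) cs \<inter> {1..N} \<times> UNIV)
    + card (phys_edges \<sigma> (a, s) cs \<inter> direct_edges \<sigma> a b)"
proof -
  let ?PE = "phys_edges \<sigma> (a, s) cs"
  have "?PE \<subseteq> {1..N} \<times> UNIV"
    using phys_edges_subset[of "{1..N}" \<sigma> "(a, s)" cs] nodes a by simp
  then have nodes_PE: "?PE \<inter> {1..N} \<times> UNIV = ?PE"
    by blast
  consider "2 \<le> card ?PE" | "?PE \<inter> direct_edges \<sigma> a b \<noteq> {}"
    using phys_edges_two_or_direct[of \<sigma> "(a, s)" cs] end_b \<open>a \<noteq> b\<close> by auto
  then show ?thesis
  proof cases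
    case 1
    then show ?thesis unfolding nodes_PE by simp
  next
    case 2
    then have "0 < card (?PE \<inter> direct_edges \<sigma> a b)" and "0 < card ?PE"
      using finite_phys_edges by (auto simp: card_gt_0_iff)
    then show ?thesis unfolding nodes_PE by simp
  qed
qed

lemma edge_usage_lower:
  assumes orn: "ORN_design N T sch R" and a: "a \<in> {1..N}" and b: "b \<in> {1..N}" and "a \<noteq> b"
  shows "2 \<le> edge_usage (sched T sch) (R a b s) ({1..N} \<times> UNIV)
    + edge_usage (sched T sch) (R a b s) (direct_edges (sched T sch) a b)"
proof -
  let ?\<sigma> = "sched T sch"
  let ?c = "\<lambda>E P. of_nat (card (phys_edges ?\<sigma> (fst P) (snd P) \<inter> E)) :: ennreal"
  have R: "\<And>P. P \<notin> paths_from_to ?\<sigma> a b s \<Longrightarrow> R a b s P = 0" "(\<Sum>\<^sub>\<infinity>P. ennreal (R a b s P)) = 1"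
    using orn a b by (auto simp: ORN_design_def oblivious_routing_def)
  have nodes: "\<And>t x. x \<in> {1..N} \<Longrightarrow> ?\<sigma> t x \<in> {1..N}"
    using orn sched_in_nodes unfolding ORN_design_def by blast
  have "ennreal (R a b s P) * 2
      \<le> ennreal (R a b s P) * ?c ({1..N} \<times> UNIV) P + ennreal (R a b s P) * ?c (direct_edges ?\<sigma> a b) P" for P
  proof (cases "P \<in> paths_from_to ?\<sigma> a b s")
    case True
    then obtain cs where P: "P = ((a, s), cs)" and end_b: "fst (end_vertex ?\<sigma> (a, s) cs) = b"
      by (cases P) (auto simp: paths_from_to_def)
    have "2 \<le> ?c ({1..N} \<times> UNIV) P + ?c (direct_edges ?\<sigma> a b) P"
      using card_phys_edges_nodes_direct[OF nodes a end_b \<open>a \<noteq> b\<close>]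
      unfolding P of_nat_add[symmetric] by (simp del: of_nat_add)
    then show ?thesis
      by (simp add: distrib_left[symmetric] mult_left_mono)
  qed (simp add: R(1))
  then have "(\<Sum>\<^sub>\<infinity>P. ennreal (R a b s P) * 2)
      \<le> (\<Sum>\<^sub>\<infinity>P. ennreal (R a b s P) * ?c ({1..N} \<times> UNIV) P + ennreal (R a b s P) * ?c (direct_edges ?\<sigma> a b) P)"
    by (intro infsum_mono) simp_all
  then show ?thesis
    by (simp add: infsum_cmult_left_ennreal R(2) infsum_add edge_usage_def)
qed

lemma period_edge_usage_lower:
  assumes "ORN_design N T sch R" and "a \<in> {1..N}" and "b \<in> {1..N}" and "a \<noteq> b"
  shows "2 * of_nat T \<le> period_edge_usage T (sched T sch) (R a b) ({1..N} \<times> UNIV)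
    + period_edge_usage T (sched T sch) (R a b) (direct_edges (sched T sch) a b)"
proof -
  have "(\<Sum>s\<in>{0..<int T}. (2 :: ennreal)) \<le> (\<Sum>s\<in>{0..<int T}.
      edge_usage (sched T sch) (R a b s) ({1..N} \<times> UNIV)
      + edge_usage (sched T sch) (R a b s) (direct_edges (sched T sch) a b))"
    using edge_usage_lower[OF assms] by (rule sum_mono)
  then show ?thesis
    by (simp add: period_edge_usage_def sum.distrib mult.commute)
qed

lemma offdiagonal_edge_usage_lower:
  assumes "ORN_design N T sch R"
  shows "of_nat (N * (N - 1) * (2 * T))
    \<le> (\<Sum>(a, b)\<in>offdiagonal N. period_edge_usage T (sched T sch) (R a b) ({1..N} \<times> UNIV))
      + (\<Sum>(a, b)\<in>offdiagonal N. period_edge_usage T (sched T sch) (R a b) (direct_edges (sched T sch) a b))"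
proof -
  have "of_nat (N * (N - 1) * (2 * T)) = (\<Sum>(a, b)\<in>offdiagonal N. 2 * of_nat T :: ennreal)"
    by (simp add: card_offdiagonal)
  also have "\<dots> \<le> (\<Sum>(a, b)\<in>offdiagonal N. period_edge_usage T (sched T sch) (R a b) ({1..N} \<times> UNIV)
      + period_edge_usage T (sched T sch) (R a b) (direct_edges (sched T sch) a b))"
    by (intro sum_mono) (use period_edge_usage_lower[OF assms] in \<open>auto simp: offdiagonal_def\<close>)
  finally show ?thesis
    by (simp only: case_prod_unfold sum.distrib)
qed

lemma sum_card_direct_edges:
  assumes "connection_schedule N T sch"
  shows "(\<Sum>(a, b)\<in>offdiagonal N. card (direct_edges (sched T sch) a b \<inter> UNIV \<times> {0..<int T})) \<le> N * T"
proof -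
  let ?D = "\<lambda>a b. direct_edges (sched T sch) a b \<inter> UNIV \<times> {0..<int T}"
  have "(\<Sum>b\<in>{1..N}. card (?D a b)) = T" if "a \<in> {1..N}" for a
  proof -
    have "finite (?D a b)" for b
      by (rule finite_subset[of _ "{a} \<times> {0..<int T}"]) (auto simp: direct_edges_def)
    then have "(\<Sum>b\<in>{1..N}. card (?D a b)) = card (\<Union>b\<in>{1..N}. ?D a b)"
      by (intro card_UN_disjoint[symmetric]) (auto simp: direct_edges_def)
    also have "(\<Union>b\<in>{1..N}. ?D a b) = {a} \<times> {0..<int T}"
      using sched_in_nodes[OF assms that] by (auto simp: direct_edges_def)
    finally show ?thesis by simp
  qed
  moreover have "(\<Sum>(a, b)\<in>offdiagonal N. card (?D a b)) \<le> (\<Sum>(a, b)\<in>{1..N} \<times> {1..N}. card (?D a b))"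
    by (rule sum_mono2) (auto simp: offdiagonal_def)
  ultimately show ?thesis
    by (simp add: sum.cartesian_product[symmetric])
qed

lemma direct_demand_bound:
  assumes orn: "ORN_design N T sch R" and thr: "guarantees_throughput N T sch R r" and "0 \<le> r"
  shows "ennreal r * (\<Sum>(a, b)\<in>offdiagonal N. period_edge_usage T (sched T sch) (R a b) (direct_edges (sched T sch) a b))
    \<le> of_nat (N * T)"
proof -
  let ?\<sigma> = "sched T sch"
  have "ennreal r * (\<Sum>(a, b)\<in>offdiagonal N. period_edge_usage T ?\<sigma> (R a b) (direct_edges ?\<sigma> a b))
      = (\<Sum>(a, b)\<in>offdiagonal N. ennreal r * period_edge_usage T ?\<sigma> (R a b) (direct_edges ?\<sigma> a b))"
    by (simp add: sum_distrib_left case_prod_unfold)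
  also have "\<dots> \<le> (\<Sum>(a, b)\<in>offdiagonal N. of_nat (card (direct_edges ?\<sigma> a b \<inter> UNIV \<times> {0..<int T})))"
    by (intro sum_mono) (use single_demand_bound[OF orn thr \<open>0 \<le> r\<close>] in \<open>auto simp: offdiagonal_def\<close>)
  also have "\<dots> \<le> of_nat (N * T)"
    using sum_card_direct_edges[of N T sch] orn
    by (simp add: ORN_design_def case_prod_unfold flip: of_nat_sum of_nat_mult)
  finally show ?thesis .
qed

lemma throughput_bound_from_counts:
  fixes N T :: nat and r :: real
  assumes "2 \<le> N" and "0 < T" and "0 \<le> r"
    and "ennreal r * of_nat (N * (N - 1) * (2 * T)) \<le> of_nat ((N - 1) * (N * T) + N * T)"
  shows "r \<le> 1/2 + 1 / (2 * (real N - 1))"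
proof -
  have "r * (N * (N - 1) * (2 * T)) \<le> (N - 1) * (N * T) + N * T"
    using assms(3,4) by (simp add: ennreal_of_nat_eq_real_of_nat ennreal_mult[symmetric] ennreal_le_iff
        del: of_nat_add of_nat_mult)
  then have "real N * real T * (r * (2 * (real N - 1))) \<le> real N * real T * real N"
    using assms(1) by (simp add: of_nat_diff algebra_simps)
  then have "r * (2 * (real N - 1)) \<le> real N"
    using assms(1,2) by simp
  then show ?thesis
    using assms(1) by (simp add: field_simps)
qed

theorem mainTheorem7:
  fixes N T :: nat and sch :: "nat \<Rightarrow> nat \<Rightarrow> nat"
    and R :: "nat \<Rightarrow> nat \<Rightarrow> int \<Rightarrow> path \<Rightarrow> real" and r :: real
  assumes "N \<ge> 2"
    and "ORN_design N T sch R"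
    and "guarantees_throughput N T sch R r"
  shows "r \<le> 1/2 + 1 / (2 * (real N - 1))"
proof (cases "r \<le> 0")
  case True
  moreover have "0 \<le> 1 / (2 * (real N - 1))"
    using assms(1) by simp
  ultimately show ?thesis by linarith
next
  case False
  let ?\<sigma> = "sched T sch"
  let ?U = "\<Sum>(a, b)\<in>offdiagonal N. period_edge_usage T ?\<sigma> (R a b) ({1..N} \<times> UNIV)"
  let ?V = "\<Sum>(a, b)\<in>offdiagonal N. period_edge_usage T ?\<sigma> (R a b) (direct_edges ?\<sigma> a b)"
  have "0 < T"
    using assms(2) by (simp add: ORN_design_def connection_schedule_def)
  have "ennreal r * of_nat (N * (N - 1) * (2 * T)) \<le> ennreal r * ?U + ennreal r * ?V"
    using offdiagonal_edge_usage_lower[OF assms(2)] by (simp add: mult_left_mono flip: distrib_left)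
  also have "\<dots> \<le> of_nat ((N - 1) * (N * T)) + of_nat (N * T)"
    using uniform_demand_bound[OF assms] direct_demand_bound[OF assms(2,3)] False
    by (intro add_mono) simp_all
  finally have "ennreal r * of_nat (N * (N - 1) * (2 * T)) \<le> of_nat ((N - 1) * (N * T) + N * T)"
    by (simp only: of_nat_add)
  then show ?thesis
    using False by (intro throughput_bound_from_counts[OF assms(1) \<open>0 < T\<close>]) simp_all
qed

end
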